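(* Let $0<m\le L$ and let $(\alpha,\beta,\gamma)$ be constant parameters. Define $a(\lambda)=\beta-\gamma\alpha\lambda$ and $b(\lambda)=(1+\gamma)\alpha\lambda-(1+\beta)$. The two-step momentum algorithm is stable for all $f\in\mathcal{Q}_m^L$ if and only if (1) $(b(\lambda),a(\lambda))\in\Delta$ for all $\lambda\in[m,L]$, equivalently (2) $(b(\lambda),a(\lambda))\in\Delta$ for $\lambda\in\{m,L\}$. Furthermore, for $\rho\in(0,1)$, the linear convergence rate $\rho$ is achieved for all $f\in\mathcal{Q}_m^L$ if and only if (1) $(b(\lambda),a(\lambda))\in\Delta_\rho$ for all $\lambda\in[m,L]$, equivalently (2) $(b(\lambda),a(\lambda))\in\Delta_\rho$ for $\lambda\in\{m,L\}$. Here $\Delta=\{(b,a):|b|-1<a<1\}$ and $\Delta_\rho=\{(b,a):\rho(|b|-\rho)\le a\le\rho^2\}$.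
   Context: $\mathcal{Q}_m^L$ is the class of quadratic functions $f(x)=\tfrac12x^TQx-q^Tx$ on $\mathbb{R}^n$ with $q\in\mathbb{R}^n$, $Q=Q^T\succ0$ whose largest eigenvalue is $L$ and smallest is $m$; $x^\star$ is the minimizer. The (noiseless) two-step momentum algorithm is $x^{t+2}=x^{t+1}+\beta(x^{t+1}-x^t)-\alpha\nabla f\big(x^{t+1}+\gamma(x^{t+1}-x^t)\big)$; with $\psi^t=[(x^t-x^\star)^T,(x^{t+1}-x^\star)^T]^T$, $\psi^{t+1}=A\psi^t$, $A=\begin{bmatrix}0&I\\-\beta I+\gamma\alpha Q&(1+\beta)I-(1+\gamma)\alpha Q\end{bmatrix}$. The algorithm is stable for all $f\in\mathcal{Q}_m^L$ if the spectral radius of $A$ is less than $1$ for every $f\in\mathcal{Q}_m^L$; it achieves linear convergence rate $\rho$ for all $f\in\mathcal{Q}_m^L$ if the spectral radius of $A$ is at most $\rho$ for every $f\in\mathcal{Q}_m^L$. *)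

theory Defs
  imports "Jordan_Normal_Form.Spectral_Radius"
begin

definition momentum_matrix :: "nat \<Rightarrow> real \<Rightarrow> real \<Rightarrow> real \<Rightarrow> real mat \<Rightarrow> real mat" where
  "momentum_matrix n \<alpha> \<beta> \<gamma> Q =
     four_block_mat (0\<^sub>m n n) (1\<^sub>m n)
       ((- \<beta>) \<cdot>\<^sub>m 1\<^sub>m n + (\<gamma> * \<alpha>) \<cdot>\<^sub>m Q)
       ((1 + \<beta>) \<cdot>\<^sub>m 1\<^sub>m n - ((1 + \<gamma>) * \<alpha>) \<cdot>\<^sub>m Q)"

text \<open>Q is the Hessian of some f in Q_m^L on R^n: symmetric positive definite,
  largest eigenvalue L, smallest eigenvalue m. (The linear term q does not affect A.)\<close>
definition in_QmL :: "nat \<Rightarrow> real \<Rightarrow> real \<Rightarrow> real mat \<Rightarrow> bool" where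
  "in_QmL n m L Q \<longleftrightarrow> Q \<in> carrier_mat n n \<and> transpose_mat Q = Q \<and>
     (\<forall>x \<in> carrier_vec n. x \<noteq> 0\<^sub>v n \<longrightarrow> x \<bullet> (Q *\<^sub>v x) > 0) \<and>
     eigenvalue Q m \<and> eigenvalue Q L \<and>
     (\<forall>ev. eigenvalue Q ev \<longrightarrow> m \<le> ev \<and> ev \<le> L)"

definition stable_all :: "nat \<Rightarrow> real \<Rightarrow> real \<Rightarrow> real \<Rightarrow> real \<Rightarrow> real \<Rightarrow> bool" where
  "stable_all n m L \<alpha> \<beta> \<gamma> \<longleftrightarrow> (\<forall>Q. in_QmL n m L Q \<longrightarrow>
     spectral_radius (map_mat complex_of_real (momentum_matrix n \<alpha> \<beta> \<gamma> Q)) < 1)"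

definition rate_all :: "nat \<Rightarrow> real \<Rightarrow> real \<Rightarrow> real \<Rightarrow> real \<Rightarrow> real \<Rightarrow> real \<Rightarrow> bool" where
  "rate_all n m L \<alpha> \<beta> \<gamma> \<rho> \<longleftrightarrow> (\<forall>Q. in_QmL n m L Q \<longrightarrow>
     spectral_radius (map_mat complex_of_real (momentum_matrix n \<alpha> \<beta> \<gamma> Q)) \<le> \<rho>)"

definition Delta :: "(real \<times> real) set" where
  "Delta = {(b, a). \<bar>b\<bar> - 1 < a \<and> a < 1}"

definition Delta_rho :: "real \<Rightarrow> (real \<times> real) set" where
  "Delta_rho \<rho> = {(b, a). \<rho> * (\<bar>b\<bar> - \<rho>) \<le> a \<and> a \<le> \<rho>\<^sup>2}"

end

theory Submission
  imports Defs "HOL-Analysis.Convex"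
begin

text \<open>On vectors of the form (u, z u) with Q u = \<lambda> u the iteration matrix acts as multiplication
  by z exactly when z is a root of z^2 + b(\<lambda>) z + a(\<lambda>); since the symmetric Q has only real
  eigenvalues, the spectrum of the iteration matrix is the set of these roots for \<lambda> in the
  spectrum of Q. The roots of z^2 + b z + a lie in the open unit disc iff (b, a) \<in> Delta and in
  the closed disc of radius \<rho> iff (b, a) \<in> Delta_rho \<rho>. Both sets are convex and
  \<lambda> \<mapsto> (b(\<lambda>), a(\<lambda>)) is affine, so the conditions need only be checked at \<lambda> = m, L; the
  matrix diag(m, L, ..., L) shows that they are also necessary.\<close>

lemma real_symmetric_eigenvalue_real:
  fixes Q :: "real mat"
  assumes Q: "Q \<in> carrier_mat n n" and sym: "transpose_mat Q = Q"
    and ev: "eigenvalue (map_mat complex_of_real Q) \<mu>"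
  shows "\<mu> \<in> \<real>"
proof -
  let ?A = "map_mat complex_of_real Q"
  have A: "?A \<in> carrier_mat n n" and symA: "transpose_mat ?A = ?A"
    using Q sym by (auto simp: map_mat_transpose)
  obtain v where v: "v \<in> carrier_vec n" "v \<noteq> 0\<^sub>v n" and Av: "?A *\<^sub>v v = \<mu> \<cdot>\<^sub>v v"
    using ev A unfolding eigenvalue_def eigenvector_def by auto
  have conj_Av: "conjugate (?A *\<^sub>v v) = ?A *\<^sub>v conjugate v"
    using Q v by (intro eq_vecI) (auto simp: scalar_prod_def cnj_sum)
  have "\<mu> * (v \<bullet>c v) = (?A *\<^sub>v v) \<bullet>c v"
    using v by (simp add: Av)
  also have "\<dots> = v \<bullet> (?A *\<^sub>v conjugate v)"
    using transpose_vec_mult_scalar[OF A, of "conjugate v" v] v by (simp add: symA)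
  also have "\<dots> = cnj \<mu> * (v \<bullet>c v)"
    using v by (simp flip: conj_Av add: Av conjugate_smult_vec)
  finally have "\<mu> = cnj \<mu>"
    using v by simp
  then show ?thesis
    by (metis Reals_cnj_iff)
qed

lemma eigenvalue_map_of_real_iff:
  fixes Q :: "real mat"
  assumes "Q \<in> carrier_mat n n"
  shows "eigenvalue (map_mat complex_of_real Q) (of_real r) \<longleftrightarrow> eigenvalue Q r"
  using assms by (simp add: eigenvalue_root_char_poly of_real_hom.char_poly_hom
      of_real_hom.poly_map_poly)

lemma eigenvalue_mat_diag_iff:
  fixes f :: "nat \<Rightarrow> 'a::field"
  shows "eigenvalue (mat_diag n f) k \<longleftrightarrow> k \<in> f ` {..<n}"
proof -
  have "upper_triangular (mat_diag n f)"
    by (auto simp: mat_diag_def upper_triangular_def)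
  then have "char_poly (mat_diag n f) = (\<Prod>a\<leftarrow>diag_mat (mat_diag n f). [:- a, 1:])"
    by (rule char_poly_upper_triangular[OF mat_diag_dim])
  moreover have "diag_mat (mat_diag n f) = map f [0..<n]"
    by (simp add: diag_mat_def mat_diag_def)
  ultimately show ?thesis
    by (auto simp: eigenvalue_root_char_poly[OF mat_diag_dim] poly_prod_list_zero_iff)
qed

lemma mat_diag_mult_vec:
  assumes "x \<in> carrier_vec n"
  shows "mat_diag n f *\<^sub>v x = vec n (\<lambda>i. f i * x $ i)"
proof (rule eq_vecI)
  fix i
  assume "i < dim_vec (vec n (\<lambda>i. f i * x $ i))"
  then have i: "i < n"
    by simp
  have "(mat_diag n f *\<^sub>v x) $ i = (\<Sum>j<n. (if i = j then f j else 0) * x $ j)"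
    using assms i by (auto simp: mat_diag_def scalar_prod_def atLeast0LessThan intro!: sum.cong)
  also have "\<dots> = f i * x $ i"
    using i by (simp add: if_distrib[of "\<lambda>c. c * _"] cong: if_cong)
  finally show "(mat_diag n f *\<^sub>v x) $ i = vec n (\<lambda>i. f i * x $ i) $ i"
    using i by simp
qed (simp add: mat_diag_def)

lemma append_vec_eq_zero_iff:
  assumes "u \<in> carrier_vec n" and "v \<in> carrier_vec k"
  shows "u @\<^sub>v v = 0\<^sub>v (n + k) \<longleftrightarrow> u = 0\<^sub>v n \<and> v = 0\<^sub>v k"
proof -
  have "0\<^sub>v (n + k) = (0\<^sub>v n :: 'a::zero vec) @\<^sub>v 0\<^sub>v k"
    by (intro eq_vecI) auto
  then show ?thesis
    using assms by simp
qed

lemma spectral_radius_eq_norm_eigenvalue: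
  assumes "A \<in> carrier_mat n n" and "0 < n"
  obtains z where "eigenvalue A z" and "spectral_radius A = cmod z"
  using spectral_radius_mem_max(1)[OF assms] unfolding spectrum_def by auto

lemma norm_eigenvalue_le_spectral_radius:
  assumes "A \<in> carrier_mat n n" and "eigenvalue A z"
  shows "cmod z \<le> spectral_radius A"
  using assms spectral_radius_mem_max(2)[OF assms(1)] eigenvalue_imp_nonzero_dim[OF assms]
  unfolding spectrum_def by auto

section \<open>Spectrum of the momentum iteration matrix\<close>

abbreviation momentum_matrix_complex :: "nat \<Rightarrow> real \<Rightarrow> real \<Rightarrow> real \<Rightarrow> real mat \<Rightarrow> complex mat" where
  "momentum_matrix_complex n \<alpha> \<beta> \<gamma> Q \<equiv> map_mat complex_of_real (momentum_matrix n \<alpha> \<beta> \<gamma> Q)"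

lemma momentum_matrix_carrier:
  "Q \<in> carrier_mat n n \<Longrightarrow> momentum_matrix n \<alpha> \<beta> \<gamma> Q \<in> carrier_mat (n + n) (n + n)"
  unfolding momentum_matrix_def by auto

lemma momentum_matrix_complex_mult_append:
  fixes u v :: "complex vec"
  assumes Q: "Q \<in> carrier_mat n n" and u: "u \<in> carrier_vec n" and v: "v \<in> carrier_vec n"
  defines "Q' \<equiv> map_mat complex_of_real Q"
  shows "momentum_matrix_complex n \<alpha> \<beta> \<gamma> Q *\<^sub>v (u @\<^sub>v v) =
    v @\<^sub>v vec n (\<lambda>i. of_real (- \<beta>) * u $ i + of_real (\<gamma> * \<alpha>) * (Q' *\<^sub>v u) $ i
      + of_real (1 + \<beta>) * v $ i - of_real ((1 + \<gamma>) * \<alpha>) * (Q' *\<^sub>v v) $ i)"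
    (is "_ = ?rhs")
proof -
  have "momentum_matrix_complex n \<alpha> \<beta> \<gamma> Q =
    four_block_mat (0\<^sub>m n n) (1\<^sub>m n)
      (of_real (- \<beta>) \<cdot>\<^sub>m 1\<^sub>m n + of_real (\<gamma> * \<alpha>) \<cdot>\<^sub>m Q')
      (of_real (1 + \<beta>) \<cdot>\<^sub>m 1\<^sub>m n - of_real ((1 + \<gamma>) * \<alpha>) \<cdot>\<^sub>m Q')"
    using Q unfolding momentum_matrix_def Q'_def by (intro eq_matI) (auto simp: index_mat_four_block)
  also have "\<dots> *\<^sub>v (u @\<^sub>v v) = ?rhs"
    using Q u v unfolding Q'_def
    by (subst four_block_mat_mult_vec[of _ n n _ n]) (auto intro!: eq_vecI
        simp: scalar_prod_def sum.distrib sum_subtractf sum_distrib_left algebra_simps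
        if_distrib[of "(*) _"] cong: if_cong)
  finally show ?thesis .
qed

lemma momentum_matrix_complex_eigen_equation_iff:
  fixes u v :: "complex vec"
  assumes Q: "Q \<in> carrier_mat n n" and u: "u \<in> carrier_vec n" and v: "v \<in> carrier_vec n"
  defines "Q' \<equiv> map_mat complex_of_real Q"
  shows "momentum_matrix_complex n \<alpha> \<beta> \<gamma> Q *\<^sub>v (u @\<^sub>v v) = z \<cdot>\<^sub>v (u @\<^sub>v v) \<longleftrightarrow>
    v = z \<cdot>\<^sub>v u \<and>
    (z\<^sup>2 - of_real (1 + \<beta>) * z + of_real \<beta>) \<cdot>\<^sub>v u
      = (of_real \<alpha> * (of_real \<gamma> - of_real (1 + \<gamma>) * z)) \<cdot>\<^sub>v (Q' *\<^sub>v u)"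
    (is "?eig \<longleftrightarrow> _ \<and> ?p \<cdot>\<^sub>v u = ?c \<cdot>\<^sub>v _")
proof -
  have "z \<cdot>\<^sub>v (u @\<^sub>v v) = (z \<cdot>\<^sub>v u) @\<^sub>v (z \<cdot>\<^sub>v v)"
    by (intro eq_vecI) auto
  then have "?eig \<longleftrightarrow> v = z \<cdot>\<^sub>v u \<and> vec n (\<lambda>i. of_real (- \<beta>) * u $ i + of_real (\<gamma> * \<alpha>) * (Q' *\<^sub>v u) $ i
      + of_real (1 + \<beta>) * v $ i - of_real ((1 + \<gamma>) * \<alpha>) * (Q' *\<^sub>v v) $ i) = z \<cdot>\<^sub>v v"
    using momentum_matrix_complex_mult_append[OF Q u v] u v unfolding Q'_def by simp
  also have "\<dots> \<longleftrightarrow> v = z \<cdot>\<^sub>v u \<and> ?p \<cdot>\<^sub>v u = ?c \<cdot>\<^sub>v (Q' *\<^sub>v u)"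
  proof (cases "v = z \<cdot>\<^sub>v u")
    case True
    have Q'zu: "Q' *\<^sub>v (z \<cdot>\<^sub>v u) = z \<cdot>\<^sub>v (Q' *\<^sub>v u)"
      using Q u unfolding Q'_def by (simp add: mult_mat_vec)
    have eq_iff_eq: "a - b = d - c \<Longrightarrow> a = b \<longleftrightarrow> c = d" for a b c d :: complex
      by (metis eq_iff_diff_eq_0)
    show ?thesis
      unfolding True Q'zu
      by (simp add: carrier_vecD[OF u] vec_eq_iff Q'_def carrier_matD[OF Q] del: index_mult_mat_vec)
        (intro iff_allI imp_cong refl eq_iff_eq, simp add: algebra_simps power2_eq_square)
  qed simp
  finally show ?thesis .
qed

lemma momentum_eigenvalue_imp_eigen_equation:
  fixes Q :: "real mat"
  assumes Q: "Q \<in> carrier_mat n n" and "eigenvalue (momentum_matrix_complex n \<alpha> \<beta> \<gamma> Q) z"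
  obtains u where "u \<in> carrier_vec n" and "u \<noteq> 0\<^sub>v n"
    and "(z\<^sup>2 - of_real (1 + \<beta>) * z + of_real \<beta>) \<cdot>\<^sub>v u
      = (of_real \<alpha> * (of_real \<gamma> - of_real (1 + \<gamma>) * z)) \<cdot>\<^sub>v (map_mat complex_of_real Q *\<^sub>v u)"
proof -
  obtain w where w: "w \<in> carrier_vec (n + n)" "w \<noteq> 0\<^sub>v (n + n)"
    and "momentum_matrix_complex n \<alpha> \<beta> \<gamma> Q *\<^sub>v w = z \<cdot>\<^sub>v w"
    using assms(2) momentum_matrix_carrier[OF Q, of \<alpha> \<beta> \<gamma>] unfolding eigenvalue_def eigenvector_def
    by auto
  moreover define u v where "u = vec_first w n" and "v = vec_last w n"
  ultimately have w_split: "w = u @\<^sub>v v"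
    and "momentum_matrix_complex n \<alpha> \<beta> \<gamma> Q *\<^sub>v (u @\<^sub>v v) = z \<cdot>\<^sub>v (u @\<^sub>v v)"
    by auto
  moreover have uv: "u \<in> carrier_vec n" "v \<in> carrier_vec n"
    unfolding u_def v_def by simp_all
  ultimately have "v = z \<cdot>\<^sub>v u" and eigen_equation:
    "(z\<^sup>2 - of_real (1 + \<beta>) * z + of_real \<beta>) \<cdot>\<^sub>v u
      = (of_real \<alpha> * (of_real \<gamma> - of_real (1 + \<gamma>) * z)) \<cdot>\<^sub>v (map_mat complex_of_real Q *\<^sub>v u)"
    using momentum_matrix_complex_eigen_equation_iff[OF Q uv] by blast+
  moreover have "u \<noteq> 0\<^sub>v n"
    using w uv append_vec_eq_zero_iff[of u n v n] unfolding w_split \<open>v = z \<cdot>\<^sub>v u\<close> by auto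
  ultimately show ?thesis
    using that uv by blast
qed

lemma momentum_eigenvalue_imp_root:
  fixes Q :: "real mat"
  assumes Q: "Q \<in> carrier_mat n n" and sym: "transpose_mat Q = Q" and l0: "eigenvalue Q l0"
    and ev: "eigenvalue (momentum_matrix_complex n \<alpha> \<beta> \<gamma> Q) z"
  shows "\<exists>l. eigenvalue Q l \<and> z\<^sup>2 + of_real ((1 + \<gamma>) * \<alpha> * l - (1 + \<beta>)) * z + of_real (\<beta> - \<gamma> * \<alpha> * l) = 0"
proof -
  let ?Q' = "map_mat complex_of_real Q"
  define p where "p = z\<^sup>2 - of_real (1 + \<beta>) * z + of_real \<beta>"
  define c where "c = of_real \<alpha> * (of_real \<gamma> - of_real (1 + \<gamma>) * z)"
  have root_iff: "z\<^sup>2 + of_real ((1 + \<gamma>) * \<alpha> * l - (1 + \<beta>)) * z + of_real (\<beta> - \<gamma> * \<alpha> * l) = 0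
      \<longleftrightarrow> p = of_real l * c" for l
    unfolding p_def c_def by (simp add: algebra_simps eq_iff_diff_eq_0[of "z\<^sup>2"])
  obtain u where u: "u \<in> carrier_vec n" "u \<noteq> 0\<^sub>v n" and pc: "p \<cdot>\<^sub>v u = c \<cdot>\<^sub>v (?Q' *\<^sub>v u)"
    using momentum_eigenvalue_imp_eigen_equation[OF Q ev] unfolding p_def c_def .
  then obtain i where i: "i < n" "u $ i \<noteq> 0"
    by (metis carrier_vecD eq_vecI index_zero_vec)
  show ?thesis
  proof (cases "c = 0")
    case True
    \<comment> \<open>Then Q drops out of the eigen-equation and z is a root for every \<lambda>.\<close>
    then have "p * u $ i = 0"
      using arg_cong[OF pc, of "\<lambda>x. x $ i"] i u Q by simp
    then show ?thesis
      using True i l0 root_iff by auto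
  next
    case False
    have "?Q' *\<^sub>v u = (p / c) \<cdot>\<^sub>v u"
      using arg_cong[OF pc, of "\<lambda>x. (1 / c) \<cdot>\<^sub>v x"] False u Q
      by (simp add: smult_smult_assoc field_simps)
    then have "eigenvalue ?Q' (p / c)"
      using u Q unfolding eigenvalue_def eigenvector_def by auto
    moreover from this obtain r where r: "p / c = of_real r"
      using real_symmetric_eigenvalue_real[OF Q sym] by (metis Reals_cases)
    ultimately show ?thesis
      using False root_iff eigenvalue_map_of_real_iff[OF Q] by (auto simp: field_simps)
  qed
qed

lemma momentum_root_imp_eigenvalue:
  fixes Q :: "real mat"
  assumes Q: "Q \<in> carrier_mat n n" and l: "eigenvalue Q l"
    and root: "z\<^sup>2 + of_real ((1 + \<gamma>) * \<alpha> * l - (1 + \<beta>)) * z + of_real (\<beta> - \<gamma> * \<alpha> * l) = 0"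
  shows "eigenvalue (momentum_matrix_complex n \<alpha> \<beta> \<gamma> Q) z"
proof -
  obtain x where "eigenvector Q x l"
    using l unfolding eigenvalue_def by blast
  define u where "u = map_vec complex_of_real x"
  have "eigenvector (map_mat complex_of_real Q) u (of_real l)"
    unfolding u_def by (rule of_real_hom.eigenvector_hom[OF Q]) fact
  then have u: "u \<in> carrier_vec n" "u \<noteq> 0\<^sub>v n"
    and Qu: "map_mat complex_of_real Q *\<^sub>v u = of_real l \<cdot>\<^sub>v u"
    using Q unfolding eigenvector_def by auto
  have "(z\<^sup>2 - of_real (1 + \<beta>) * z + of_real \<beta>) \<cdot>\<^sub>v u
      = (of_real \<alpha> * (of_real \<gamma> - of_real (1 + \<gamma>) * z)) \<cdot>\<^sub>v (of_real l \<cdot>\<^sub>v u)"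
  proof -
    have "z\<^sup>2 - of_real (1 + \<beta>) * z + of_real \<beta> = of_real \<alpha> * (of_real \<gamma> - of_real (1 + \<gamma>) * z) * of_real l"
      using root by (simp add: algebra_simps eq_iff_diff_eq_0[of "z\<^sup>2"])
    then show ?thesis
      by (simp add: smult_smult_assoc)
  qed
  then have "momentum_matrix_complex n \<alpha> \<beta> \<gamma> Q *\<^sub>v (u @\<^sub>v z \<cdot>\<^sub>v u) = z \<cdot>\<^sub>v (u @\<^sub>v z \<cdot>\<^sub>v u)"
    using momentum_matrix_complex_eigen_equation_iff[OF Q u(1) smult_carrier_vec[THEN iffD2, OF u(1)]] Qu
    by simp
  moreover have "u @\<^sub>v z \<cdot>\<^sub>v u \<noteq> 0\<^sub>v (n + n)"
    using u append_vec_eq_zero_iff[of u n "z \<cdot>\<^sub>v u" n] by auto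
  ultimately show ?thesis
    using u Q momentum_matrix_carrier[OF Q, of \<alpha> \<beta> \<gamma>]
    unfolding eigenvalue_def eigenvector_def by (intro exI[of _ "u @\<^sub>v z \<cdot>\<^sub>v u"]) auto
qed

definition extremal_hessian :: "nat \<Rightarrow> real \<Rightarrow> real \<Rightarrow> real mat" where
  "extremal_hessian n m L = mat_diag n (\<lambda>i. if i = 0 then m else L)"

lemma in_QmL_extremal_hessian:
  assumes "0 < m" and "m \<le> L" and "1 \<le> n" and "2 \<le> n \<or> m = L"
  shows "in_QmL n m L (extremal_hessian n m L)"
proof -
  define d where "d i = (if i = 0 then m else L)" for i :: nat
  have d_pos: "0 < d i" for i
    using assms(1,2) unfolding d_def by auto
  have "transpose_mat (mat_diag n d) = mat_diag n d"
    by (auto simp: mat_diag_def)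
  moreover have "0 < x \<bullet> (mat_diag n d *\<^sub>v x)" if x: "x \<in> carrier_vec n" "x \<noteq> 0\<^sub>v n" for x
  proof -
    obtain i where i: "i < n" "x $ i \<noteq> 0"
      using x by (metis carrier_vecD eq_vecI index_zero_vec)
    have "x \<bullet> (mat_diag n d *\<^sub>v x) = (\<Sum>j\<in>{0..<n}. d j * (x $ j)\<^sup>2)"
      using x(1) by (auto simp: mat_diag_mult_vec scalar_prod_def power2_eq_square ac_simps)
    also have "\<dots> > 0"
      using i d_pos by (intro sum_pos2[of _ i]) (auto simp: less_imp_le[OF d_pos])
    finally show ?thesis .
  qed
  moreover have ev_iff: "eigenvalue (mat_diag n d) l \<longleftrightarrow> l \<in> d ` {..<n}" for l
    by (rule eigenvalue_mat_diag_iff)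
  moreover have "eigenvalue (mat_diag n d) m"
    using assms(3) by (simp add: ev_iff d_def image_iff)
  moreover have "eigenvalue (mat_diag n d) L"
  proof (cases "2 \<le> n")
    case True
    then have "L = d 1" and "1 < n"
      by (auto simp: d_def)
    then show ?thesis
      by (auto simp: ev_iff)
  next
    case False
    with assms(4) \<open>eigenvalue (mat_diag n d) m\<close> show ?thesis
      by simp
  qed
  moreover have "m \<le> l \<and> l \<le> L" if "eigenvalue (mat_diag n d) l" for l
    using that assms(2) by (auto simp: ev_iff d_def)
  ultimately show ?thesis
    unfolding in_QmL_def extremal_hessian_def d_def[symmetric] by auto
qed

section \<open>Roots of real quadratics\<close>

lemma quadratic_nonreal_root:
  fixes z :: complex and a b :: real
  assumes root: "z\<^sup>2 + of_real b * z + of_real a = 0" and "Im z \<noteq> 0"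
  shows "(cmod z)\<^sup>2 = a" and "b\<^sup>2 < 4 * a"
proof -
  have "Re (z\<^sup>2 + of_real b * z + of_real a) = 0" and "Im (z\<^sup>2 + of_real b * z + of_real a) = 0"
    using root by simp_all
  then have re: "(Re z)\<^sup>2 - (Im z)\<^sup>2 + b * Re z + a = 0" and im: "(2 * Re z + b) * Im z = 0"
    by (simp_all add: power2_eq_square algebra_simps)
  have Re: "Re z = - b / 2"
    using im \<open>Im z \<noteq> 0\<close> by simp
  have Im: "(Im z)\<^sup>2 = a - b\<^sup>2 / 4"
    using re unfolding Re by (simp add: power2_eq_square field_simps)
  show "(cmod z)\<^sup>2 = a"
    unfolding cmod_power2 Re Im by (simp add: power2_eq_square)
  have "0 < (Im z)\<^sup>2"
    using \<open>Im z \<noteq> 0\<close> by simp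
  then show "b\<^sup>2 < 4 * a"
    unfolding Im by simp
qed

lemma quadratic_roots_cases:
  fixes a b :: real
  obtains z :: complex where "z\<^sup>2 + of_real b * z + of_real a = 0" and "Im z \<noteq> 0"
  | r1 r2 where "r1\<^sup>2 + b * r1 + a = 0" and "r2\<^sup>2 + b * r2 + a = 0" and "r1 + r2 = - b" and "r1 * r2 = a"
proof (cases "b\<^sup>2 < 4 * a")
  case True
  define s where "s = sqrt (4 * a - b\<^sup>2)"
  have "s\<^sup>2 = 4 * a - b\<^sup>2" and "s \<noteq> 0"
    using True unfolding s_def by simp_all
  then have "(Complex (- b / 2) (s / 2))\<^sup>2 + of_real b * Complex (- b / 2) (s / 2) + of_real a = 0"
    by (simp add: complex_eq_iff power2_eq_square field_simps)
  with \<open>s \<noteq> 0\<close> show ?thesis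
    using that(1) by simp
next
  case False
  define s where "s = sqrt (b\<^sup>2 - 4 * a)"
  have "s\<^sup>2 = b\<^sup>2 - 4 * a"
    using False unfolding s_def by simp
  then show ?thesis
    using that(2)[of "(- b + s) / 2" "(- b - s) / 2"] by (simp add: power2_eq_square field_simps)
qed

lemma quadratic_real_root_abs_less:
  fixes x a b :: real
  assumes "x\<^sup>2 + b * x + a = 0" and "(b, a) \<in> Delta"
  shows "\<bar>x\<bar> < 1"
proof (rule ccontr)
  assume "\<not> \<bar>x\<bar> < 1"
  have "\<bar>b\<bar> - 1 < a" and "a < 1"
    using assms(2) unfolding Delta_def by auto
  have "- (\<bar>b\<bar> * \<bar>x\<bar>) \<le> b * x"
    by (metis abs_ge_minus_self abs_mult minus_le_iff)
  moreover have "(\<bar>x\<bar> - 1) * (\<bar>x\<bar> + 1 - \<bar>b\<bar>) = \<bar>x\<bar>\<^sup>2 - \<bar>b\<bar> * \<bar>x\<bar> + \<bar>b\<bar> - 1"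
    by (simp add: algebra_simps power2_eq_square)
  ultimately have "(\<bar>x\<bar> - 1) * (\<bar>x\<bar> + 1 - \<bar>b\<bar>) < x\<^sup>2 + b * x + a"
    using \<open>\<bar>b\<bar> - 1 < a\<close> by simp
  moreover have "0 \<le> (\<bar>x\<bar> - 1) * (\<bar>x\<bar> + 1 - \<bar>b\<bar>)"
    using \<open>\<not> \<bar>x\<bar> < 1\<close> \<open>\<bar>b\<bar> - 1 < a\<close> \<open>a < 1\<close> by simp
  ultimately show False
    using assms(1) by simp
qed

lemma quadratic_real_root_abs_le:
  fixes x a b \<rho> :: real
  assumes "x\<^sup>2 + b * x + a = 0" and "(b, a) \<in> Delta_rho \<rho>" and "0 < \<rho>"
  shows "\<bar>x\<bar> \<le> \<rho>"
proof (rule ccontr)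
  assume "\<not> \<bar>x\<bar> \<le> \<rho>"
  have "\<rho> * \<bar>b\<bar> - \<rho>\<^sup>2 \<le> a" and "a \<le> \<rho>\<^sup>2"
    using assms(2) unfolding Delta_rho_def by (auto simp: right_diff_distrib power2_eq_square)
  then have "\<rho> * \<bar>b\<bar> \<le> \<rho> * (2 * \<rho>)"
    by (simp add: power2_eq_square)
  then have "\<bar>b\<bar> \<le> 2 * \<rho>"
    using \<open>0 < \<rho>\<close> by simp
  have "- (\<bar>b\<bar> * \<bar>x\<bar>) \<le> b * x"
    by (metis abs_ge_minus_self abs_mult minus_le_iff)
  moreover have "(\<bar>x\<bar> - \<rho>) * (\<bar>x\<bar> + \<rho> - \<bar>b\<bar>) = \<bar>x\<bar>\<^sup>2 - \<bar>b\<bar> * \<bar>x\<bar> + \<rho> * \<bar>b\<bar> - \<rho>\<^sup>2"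
    by (simp add: algebra_simps power2_eq_square)
  ultimately have "(\<bar>x\<bar> - \<rho>) * (\<bar>x\<bar> + \<rho> - \<bar>b\<bar>) \<le> x\<^sup>2 + b * x + a"
    using \<open>\<rho> * \<bar>b\<bar> - \<rho>\<^sup>2 \<le> a\<close> by simp
  moreover have "0 < (\<bar>x\<bar> - \<rho>) * (\<bar>x\<bar> + \<rho> - \<bar>b\<bar>)"
    using \<open>\<not> \<bar>x\<bar> \<le> \<rho>\<close> \<open>\<bar>b\<bar> \<le> 2 * \<rho>\<close> by simp
  ultimately show False
    using assms(1) by simp
qed

lemma quadratic_real_root_iff:
  fixes x a b :: real
  shows "(complex_of_real x)\<^sup>2 + of_real b * of_real x + of_real a = 0 \<longleftrightarrow> x\<^sup>2 + b * x + a = 0"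
proof -
  have "(complex_of_real x)\<^sup>2 + of_real b * of_real x + of_real a = of_real (x\<^sup>2 + b * x + a)"
    by simp
  then show ?thesis
    by (simp only: of_real_eq_0_iff)
qed

lemma quadratic_roots_norm_less_one_imp_Delta:
  fixes a b :: real
  assumes roots: "\<And>z::complex. z\<^sup>2 + of_real b * z + of_real a = 0 \<Longrightarrow> cmod z < 1"
  shows "(b, a) \<in> Delta"
proof (cases rule: quadratic_roots_cases[of b a])
  case (1 z)
  have "(cmod z)\<^sup>2 < 1"
    using roots 1(1) by (simp add: power_less_one_iff)
  then have "a < 1" and "b\<^sup>2 < 4 * a"
    using quadratic_nonreal_root[OF 1] by simp_all
  moreover have "4 * a \<le> (a + 1)\<^sup>2"
    using zero_le_power2[of "a - 1"] by (simp add: power2_eq_square algebra_simps)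
  ultimately have "\<bar>b\<bar>\<^sup>2 < (a + 1)\<^sup>2"
    by simp
  then have "\<bar>b\<bar> < a + 1"
    by (rule power2_less_imp_less) (use \<open>b\<^sup>2 < 4 * a\<close> zero_le_power2[of b] in linarith)
  with \<open>a < 1\<close> show ?thesis
    unfolding Delta_def by simp
next
  case (2 r1 r2)
  have b_sum: "b = - (r1 + r2)"
    using 2(3) by simp
  have "\<bar>r\<bar> < 1" if "r\<^sup>2 + b * r + a = 0" for r
    using roots[of "of_real r"] quadratic_real_root_iff[of r b a] that by simp
  then have r1: "\<bar>r1\<bar> < 1" and r2: "\<bar>r2\<bar> < 1"
    using 2(1,2) by blast+
  then have "\<bar>a\<bar> < 1"
    unfolding 2(4)[symmetric] abs_mult using mult_strict_mono'[OF r1 r2] by simp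
  moreover have "0 < (1 - r1) * (1 - r2)" and "0 < (1 + r1) * (1 + r2)"
    using r1 r2 by auto
  moreover have "(1 - r1) * (1 - r2) = 1 + b + a" and "(1 + r1) * (1 + r2) = 1 - b + a"
    unfolding 2(4)[symmetric] b_sum
    by (simp_all add: algebra_simps)
  ultimately show ?thesis
    unfolding Delta_def by (auto simp: abs_less_iff)
qed

lemma quadratic_root_norm_less_one:
  fixes z :: complex and a b :: real
  assumes "(b, a) \<in> Delta" and root: "z\<^sup>2 + of_real b * z + of_real a = 0"
  shows "cmod z < 1"
proof (cases "Im z = 0")
  case True
  then obtain x where "z = of_real x"
    using complex_is_Real_iff by (auto elim: Reals_cases)
  then show ?thesis
    using root quadratic_real_root_iff quadratic_real_root_abs_less[OF _ \<open>(b, a) \<in> Delta\<close>]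
    by auto
next
  case False
  then have "(cmod z)\<^sup>2 < 1"
    using quadratic_nonreal_root(1)[OF root] \<open>(b, a) \<in> Delta\<close> unfolding Delta_def by simp
  then show ?thesis
    by (simp add: power_less_one_iff)
qed

lemma quadratic_roots_norm_less_one_iff:
  fixes a b :: real
  shows "(\<forall>z::complex. z\<^sup>2 + of_real b * z + of_real a = 0 \<longrightarrow> cmod z < 1) \<longleftrightarrow> (b, a) \<in> Delta"
  using quadratic_roots_norm_less_one_imp_Delta quadratic_root_norm_less_one by blast

lemma quadratic_roots_norm_le_imp_Delta_rho:
  fixes a b \<rho> :: real
  assumes "0 < \<rho>" and roots: "\<And>z::complex. z\<^sup>2 + of_real b * z + of_real a = 0 \<Longrightarrow> cmod z \<le> \<rho>"
  shows "(b, a) \<in> Delta_rho \<rho>"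
proof (cases rule: quadratic_roots_cases[of b a])
  case (1 z)
  have "(cmod z)\<^sup>2 \<le> \<rho>\<^sup>2"
    using roots 1(1) by (simp add: power_mono)
  then have "a \<le> \<rho>\<^sup>2" and "b\<^sup>2 < 4 * a"
    using quadratic_nonreal_root[OF 1] by simp_all
  moreover have "\<rho>\<^sup>2 * (4 * a) \<le> (a + \<rho>\<^sup>2)\<^sup>2"
    using zero_le_power2[of "a - \<rho>\<^sup>2"] by (simp add: power2_eq_square algebra_simps)
  moreover have "\<rho>\<^sup>2 * b\<^sup>2 < \<rho>\<^sup>2 * (4 * a)"
    using \<open>b\<^sup>2 < 4 * a\<close> \<open>0 < \<rho>\<close> by simp
  ultimately have "(\<rho> * \<bar>b\<bar>)\<^sup>2 < (a + \<rho>\<^sup>2)\<^sup>2"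
    by (simp add: power_mult_distrib)
  then have "\<rho> * \<bar>b\<bar> < a + \<rho>\<^sup>2"
    by (rule power2_less_imp_less)
      (use \<open>b\<^sup>2 < 4 * a\<close> zero_le_power2[of b] zero_le_power2[of \<rho>] in linarith)
  with \<open>a \<le> \<rho>\<^sup>2\<close> show ?thesis
    unfolding Delta_rho_def by (simp add: algebra_simps power2_eq_square)
next
  case (2 r1 r2)
  have b_sum: "b = - (r1 + r2)"
    using 2(3) by simp
  have "\<bar>r\<bar> \<le> \<rho>" if "r\<^sup>2 + b * r + a = 0" for r
    using roots[of "of_real r"] quadratic_real_root_iff[of r b a] that by simp
  then have r1: "\<bar>r1\<bar> \<le> \<rho>" and r2: "\<bar>r2\<bar> \<le> \<rho>"
    using 2(1,2) by blast+
  then have "\<bar>a\<bar> \<le> \<rho>\<^sup>2"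
    unfolding 2(4)[symmetric] abs_mult power2_eq_square using \<open>0 < \<rho>\<close> by (intro mult_mono) auto
  moreover have "0 \<le> (\<rho> - r1) * (\<rho> - r2)" and "0 \<le> (\<rho> + r1) * (\<rho> + r2)"
    using r1 r2 by auto
  moreover have "(\<rho> - r1) * (\<rho> - r2) = \<rho>\<^sup>2 + \<rho> * b + a"
    and "(\<rho> + r1) * (\<rho> + r2) = \<rho>\<^sup>2 - \<rho> * b + a"
    unfolding 2(4)[symmetric] b_sum
    by (simp_all add: algebra_simps power2_eq_square)
  ultimately have "\<bar>\<rho> * b\<bar> \<le> a + \<rho>\<^sup>2"
    by (simp add: abs_le_iff)
  then show ?thesis
    using \<open>\<bar>a\<bar> \<le> \<rho>\<^sup>2\<close> \<open>0 < \<rho>\<close> unfolding Delta_rho_def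
    by (simp add: abs_mult right_diff_distrib power2_eq_square)
qed

lemma quadratic_root_norm_le:
  fixes z :: complex and a b \<rho> :: real
  assumes "0 < \<rho>" and "(b, a) \<in> Delta_rho \<rho>" and root: "z\<^sup>2 + of_real b * z + of_real a = 0"
  shows "cmod z \<le> \<rho>"
proof (cases "Im z = 0")
  case True
  then obtain x where "z = of_real x"
    using complex_is_Real_iff by (auto elim: Reals_cases)
  then show ?thesis
    using root quadratic_real_root_iff quadratic_real_root_abs_le[OF _ \<open>(b, a) \<in> Delta_rho \<rho>\<close> \<open>0 < \<rho>\<close>]
    by auto
next
  case False
  then have "(cmod z)\<^sup>2 \<le> \<rho>\<^sup>2"
    using quadratic_nonreal_root(1)[OF root] \<open>(b, a) \<in> Delta_rho \<rho>\<close> unfolding Delta_rho_def by simp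
  then show ?thesis
    by (rule power2_le_imp_le) (use \<open>0 < \<rho>\<close> in simp)
qed

lemma quadratic_roots_norm_le_iff:
  fixes a b \<rho> :: real
  assumes "0 < \<rho>"
  shows "(\<forall>z::complex. z\<^sup>2 + of_real b * z + of_real a = 0 \<longrightarrow> cmod z \<le> \<rho>) \<longleftrightarrow> (b, a) \<in> Delta_rho \<rho>"
  using assms quadratic_roots_norm_le_imp_Delta_rho quadratic_root_norm_le by blast

section \<open>Reduction to the extreme eigenvalues\<close>

lemma convex_Delta: "convex Delta"
proof -
  have "Delta = {x. inner (1, -1) x < 1} \<inter> {x. inner (-1, -1) x < 1} \<inter> {x. inner (0, 1) x < (1::real)}"
    by (auto simp: Delta_def abs_less_iff)
  then show ?thesis
    by (metis convex_Int convex_halfspace_lt)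
qed

lemma convex_Delta_rho:
  assumes "0 \<le> \<rho>"
  shows "convex (Delta_rho \<rho>)"
proof -
  have "Delta_rho \<rho> = {x. inner (\<rho>, -1) x \<le> \<rho>\<^sup>2} \<inter> {x. inner (-\<rho>, -1) x \<le> \<rho>\<^sup>2} \<inter> {x. inner (0, 1) x \<le> \<rho>\<^sup>2}"
  proof -
    have "\<rho> * (\<bar>b\<bar> - \<rho>) \<le> a \<longleftrightarrow> \<bar>\<rho> * b\<bar> \<le> a + \<rho>\<^sup>2" for a b
      using assms by (auto simp: abs_mult power2_eq_square algebra_simps)
    then show ?thesis
      by (auto simp: Delta_rho_def abs_le_iff algebra_simps)
  qed
  then show ?thesis
    by (metis convex_Int convex_halfspace_le)
qed

lemma convex_contains_affine_path:
  fixes c d :: "'a::real_vector"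
  assumes "convex S" and "c + m *\<^sub>R d \<in> S" and "c + L *\<^sub>R d \<in> S" and "t \<in> {m..L}"
  shows "c + t *\<^sub>R d \<in> S"
proof (cases "m = L")
  case True
  with assms show ?thesis by simp
next
  case False
  define u where "u = (t - m) / (L - m)"
  have "m < L"
    using assms(4) False by simp
  then have u: "0 \<le> u" "u \<le> 1" and "u * (L - m) = t - m"
    using assms(4) by (auto simp: u_def field_simps)
  then have t: "t = (1 - u) * m + u * L"
    by (simp add: algebra_simps)
  have "(1 - u) *\<^sub>R (c + m *\<^sub>R d) + u *\<^sub>R (c + L *\<^sub>R d) \<in> S"
    using convexD_alt[OF assms(1-3) u] .
  also have "(1 - u) *\<^sub>R (c + m *\<^sub>R d) + u *\<^sub>R (c + L *\<^sub>R d) = c + t *\<^sub>R d"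
    by (simp add: t algebra_simps)
  finally show ?thesis .
qed

lemma momentum_coefficients_in_convex_iff_endpoints:
  fixes a b :: "real \<Rightarrow> real"
  assumes "convex S" and "m \<le> L"
    and a: "\<And>t. a t = \<beta> - \<gamma> * \<alpha> * t" and b: "\<And>t. b t = (1 + \<gamma>) * \<alpha> * t - (1 + \<beta>)"
  shows "(\<forall>t\<in>{m..L}. (b t, a t) \<in> S) \<longleftrightarrow> (\<forall>t\<in>{m, L}. (b t, a t) \<in> S)"
proof -
  have line: "(b t, a t) = (- (1 + \<beta>), \<beta>) + t *\<^sub>R ((1 + \<gamma>) * \<alpha>, - (\<gamma> * \<alpha>))" for t
    by (simp add: a b algebra_simps)
  show ?thesis
    unfolding line
    using convex_contains_affine_path[OF assms(1), of "(- (1 + \<beta>), \<beta>)" m "((1 + \<gamma>) * \<alpha>, - (\<gamma> * \<alpha>))" L]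
      assms(2) by auto
qed

lemma momentum_spectral_radius_attained_at_root:
  assumes "in_QmL n m L Q" and "1 \<le> n"
  obtains l z where "l \<in> {m..L}"
    and "z\<^sup>2 + of_real ((1 + \<gamma>) * \<alpha> * l - (1 + \<beta>)) * z + of_real (\<beta> - \<gamma> * \<alpha> * l) = 0"
    and "spectral_radius (momentum_matrix_complex n \<alpha> \<beta> \<gamma> Q) = cmod z"
proof -
  from assms(1) have Q: "Q \<in> carrier_mat n n" and sym: "transpose_mat Q = Q" and "eigenvalue Q m"
    and spectrum: "\<And>l. eigenvalue Q l \<Longrightarrow> l \<in> {m..L}"
    unfolding in_QmL_def by auto
  have "momentum_matrix_complex n \<alpha> \<beta> \<gamma> Q \<in> carrier_mat (n + n) (n + n)"
    using momentum_matrix_carrier[OF Q] by simp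
  then obtain z where z: "eigenvalue (momentum_matrix_complex n \<alpha> \<beta> \<gamma> Q) z"
    and "spectral_radius (momentum_matrix_complex n \<alpha> \<beta> \<gamma> Q) = cmod z"
    by (rule spectral_radius_eq_norm_eigenvalue) (use assms(2) in auto)
  moreover obtain l where "eigenvalue Q l"
    and "z\<^sup>2 + of_real ((1 + \<gamma>) * \<alpha> * l - (1 + \<beta>)) * z + of_real (\<beta> - \<gamma> * \<alpha> * l) = 0"
    using momentum_eigenvalue_imp_root[OF Q sym \<open>eigenvalue Q m\<close> z] by blast
  ultimately show ?thesis
    using that spectrum by blast
qed

lemma extremal_root_le_momentum_spectral_radius:
  assumes "0 < m" and "m \<le> L" and "1 \<le> n" and "2 \<le> n \<or> m = L" and "l \<in> {m, L}"
    and "z\<^sup>2 + of_real ((1 + \<gamma>) * \<alpha> * l - (1 + \<beta>)) * z + of_real (\<beta> - \<gamma> * \<alpha> * l) = 0"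
  shows "cmod z \<le> spectral_radius (momentum_matrix_complex n \<alpha> \<beta> \<gamma> (extremal_hessian n m L))"
proof -
  have "in_QmL n m L (extremal_hessian n m L)"
    using assms(1-4) by (rule in_QmL_extremal_hessian)
  then have Q: "extremal_hessian n m L \<in> carrier_mat n n" and "eigenvalue (extremal_hessian n m L) l"
    using assms(5) unfolding in_QmL_def by auto
  then have "eigenvalue (momentum_matrix_complex n \<alpha> \<beta> \<gamma> (extremal_hessian n m L)) z"
    using assms(6) by (rule momentum_root_imp_eigenvalue)
  then show ?thesis
    using momentum_matrix_carrier[OF Q] by (intro norm_eigenvalue_le_spectral_radius) simp_all
qed

lemma momentum_spectral_radius_bound_iff:
  fixes P :: "real \<Rightarrow> bool" and S :: "(real \<times> real) set" and a b :: "real \<Rightarrow> real"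
  assumes hyps: "0 < m" "m \<le> L" "1 \<le> n" "2 \<le> n \<or> m = L"
    and a: "\<And>t. a t = \<beta> - \<gamma> * \<alpha> * t" and b: "\<And>t. b t = (1 + \<gamma>) * \<alpha> * t - (1 + \<beta>)"
    and roots_iff: "\<And>b a. (\<forall>z::complex. z\<^sup>2 + of_real b * z + of_real a = 0 \<longrightarrow> P (cmod z)) \<longleftrightarrow> (b, a) \<in> S"
    and P_mono: "\<And>r s. P r \<Longrightarrow> s \<le> r \<Longrightarrow> P s"
    and "convex S"
  shows "(\<forall>Q. in_QmL n m L Q \<longrightarrow> P (spectral_radius (momentum_matrix_complex n \<alpha> \<beta> \<gamma> Q)))
    \<longleftrightarrow> (\<forall>t\<in>{m..L}. (b t, a t) \<in> S)"
proof
  assume "\<forall>Q. in_QmL n m L Q \<longrightarrow> P (spectral_radius (momentum_matrix_complex n \<alpha> \<beta> \<gamma> Q))"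
  then have "P (spectral_radius (momentum_matrix_complex n \<alpha> \<beta> \<gamma> (extremal_hessian n m L)))"
    using in_QmL_extremal_hessian[OF hyps] by blast
  then have "(b t, a t) \<in> S" if "t \<in> {m, L}" for t
    using extremal_root_le_momentum_spectral_radius[OF hyps that] P_mono
    unfolding roots_iff[symmetric] a b by auto
  then show "\<forall>t\<in>{m..L}. (b t, a t) \<in> S"
    using momentum_coefficients_in_convex_iff_endpoints[OF \<open>convex S\<close> hyps(2) a b] by blast
next
  assume coefficients: "\<forall>t\<in>{m..L}. (b t, a t) \<in> S"
  show "\<forall>Q. in_QmL n m L Q \<longrightarrow> P (spectral_radius (momentum_matrix_complex n \<alpha> \<beta> \<gamma> Q))"
  proof (intro allI impI)
    fix Q
    assume "in_QmL n m L Q"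
    then obtain l z where "l \<in> {m..L}" and root: "z\<^sup>2 + of_real (b l) * z + of_real (a l) = 0"
      and radius: "spectral_radius (momentum_matrix_complex n \<alpha> \<beta> \<gamma> Q) = cmod z"
      using hyps(3) unfolding a b by (rule momentum_spectral_radius_attained_at_root)
    then have "(b l, a l) \<in> S"
      using coefficients by blast
    then show "P (spectral_radius (momentum_matrix_complex n \<alpha> \<beta> \<gamma> Q))"
      unfolding radius using root roots_iff[of "b l" "a l"] by blast
  qed
qed

theorem lemma3:
  fixes n :: nat and m L \<alpha> \<beta> \<gamma> :: real and a b :: "real \<Rightarrow> real"
  assumes "0 < m" and "m \<le> L"
    and "1 \<le> n" and "2 \<le> n \<or> m = L"
    and "\<And>t. a t = \<beta> - \<gamma> * \<alpha> * t"
    and "\<And>t. b t = (1 + \<gamma>) * \<alpha> * t - (1 + \<beta>)"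
  shows "(stable_all n m L \<alpha> \<beta> \<gamma> \<longleftrightarrow> (\<forall>t\<in>{m..L}. (b t, a t) \<in> Delta))
       \<and> ((\<forall>t\<in>{m..L}. (b t, a t) \<in> Delta) \<longleftrightarrow> (\<forall>t\<in>{m, L}. (b t, a t) \<in> Delta))
       \<and> (\<forall>\<rho>. 0 < \<rho> \<and> \<rho> < 1 \<longrightarrow>
            (rate_all n m L \<alpha> \<beta> \<gamma> \<rho> \<longleftrightarrow> (\<forall>t\<in>{m..L}. (b t, a t) \<in> Delta_rho \<rho>))
          \<and> ((\<forall>t\<in>{m..L}. (b t, a t) \<in> Delta_rho \<rho>) \<longleftrightarrow>
             (\<forall>t\<in>{m, L}. (b t, a t) \<in> Delta_rho \<rho>)))"
proof -
  have endpoints: "(\<forall>t\<in>{m..L}. (b t, a t) \<in> S) \<longleftrightarrow> (\<forall>t\<in>{m, L}. (b t, a t) \<in> S)" if "convex S" for S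
    using momentum_coefficients_in_convex_iff_endpoints[OF that assms(2,5,6)] .
  have "stable_all n m L \<alpha> \<beta> \<gamma> \<longleftrightarrow> (\<forall>t\<in>{m..L}. (b t, a t) \<in> Delta)"
    unfolding stable_all_def
    by (rule momentum_spectral_radius_bound_iff[OF assms quadratic_roots_norm_less_one_iff _ convex_Delta])
      simp
  moreover have "rate_all n m L \<alpha> \<beta> \<gamma> \<rho> \<longleftrightarrow> (\<forall>t\<in>{m..L}. (b t, a t) \<in> Delta_rho \<rho>)"
    if "0 < \<rho>" for \<rho>
    unfolding rate_all_def
    by (rule momentum_spectral_radius_bound_iff[OF assms quadratic_roots_norm_le_iff[OF that] _
          convex_Delta_rho]) (use that in simp_all)
  ultimately show ?thesis
    using endpoints convex_Delta convex_Delta_rho by (simp add: less_imp_le)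
qed

end
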